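(* Assume H1 and that at least one of H2, H3 holds. Let $W=W_q$ for some $q\in\mathbb{N}^*$ if H2 holds and $W=W_\alpha$ for some $\alpha<\eta$ if H3 holds. Then $\sup_{\theta\in\Theta}\{\pi_\theta(W)+\bar\pi_\theta(W)\}<+\infty$.
   Context: $\|\cdot\|$ Euclidean, $\Theta\subset\mathbb{R}^{d_\Theta}$ nonempty. $\mathtt{m}$-convex: $V(tx+(1-t)y)\le tV(x)+(1-t)V(y)-(\mathtt{m}/2)t(1-t)\|x-y\|^2$. H1: for every $\theta\in\Theta$ convex $V_\theta,\bar V_\theta,U_\theta,\bar U_\theta:\mathbb{R}^d\to[0,\infty)$ with (a) $\pi_\theta(x)\propto e^{-V_\theta(x)-U_\theta(x)}$, $\bar\pi_\theta(x)\propto e^{-\bar V_\theta(x)-\bar U_\theta(x)}$ probability densities and $\min(\inf_\theta\int e^{-V_\theta-U_\theta},\inf_\theta\int e^{-\bar V_\theta-\bar U_\theta})>0$; (b) $V_\theta,\bar V_\theta$ $C^1$ with $L$-Lipschitz gradients, and for each $\theta$ minimizers of $V_\theta,\bar V_\theta$ with norm $\le R_{V,1}$ and minimum values of absolute value $\le R_{V,2}$; (c) $U_\theta,\bar U_\theta$ $M$-Lipschitz with points of norm $\le R_{U,1}$ where $|U_\theta|,|\bar U_\theta|\le R_{U,2}$ (all constants independent of $\theta$). H2: there is $\mathtt{m}>0$ with $V_\theta,\bar V_\theta$ $\mathtt{m}$-convex for all $\theta$. H3: there are $\eta>0,c\ge0$ with $\min(U_\theta(x),\bar U_\theta(x))\ge\eta\|x\|-c$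 for all $\theta,x$. $W_q(x)=1+\|x\|^{2q}$, $W_\alpha(x)=\exp[\alpha\sqrt{1+\|x\|^2}]$; $\mu(W)=\int Wd\mu$. *)

theory Defs
  imports "HOL-Analysis.Analysis"
begin

definition m_convex :: "real \<Rightarrow> ('a::euclidean_space \<Rightarrow> real) \<Rightarrow> bool" where
  "m_convex m V \<longleftrightarrow> (\<forall>x y. \<forall>t\<in>{0..1}.
     V (t *\<^sub>R x + (1 - t) *\<^sub>R y) \<le> t * V x + (1 - t) * V y - (m / 2) * t * (1 - t) * (norm (x - y))\<^sup>2)"

text \<open>Moment pi(W) of the probability density proportional to exp(-H) w.r.t. Lebesgue measure.
  Computed as a nonnegative (possibly infinite) integral.\<close>
definition gibbs_moment :: "('a::euclidean_space \<Rightarrow> real) \<Rightarrow> ('a \<Rightarrow> real) \<Rightarrow> ennreal" where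
  "gibbs_moment H W =
     (\<integral>\<^sup>+ x. ennreal (W x * exp (- H x)) \<partial>lborel) / (\<integral>\<^sup>+ x. ennreal (exp (- H x)) \<partial>lborel)"

definition W_poly :: "nat \<Rightarrow> 'a::euclidean_space \<Rightarrow> real" where
  "W_poly q x = 1 + norm x ^ (2 * q)"

definition W_exp :: "real \<Rightarrow> 'a::euclidean_space \<Rightarrow> real" where
  "W_exp \<alpha> x = exp (\<alpha> * sqrt (1 + (norm x)\<^sup>2))"

definition H1 :: "'p set \<Rightarrow> ('p \<Rightarrow> 'a::euclidean_space \<Rightarrow> real) \<Rightarrow> ('p \<Rightarrow> 'a \<Rightarrow> real)
    \<Rightarrow> ('p \<Rightarrow> 'a \<Rightarrow> real) \<Rightarrow> ('p \<Rightarrow> 'a \<Rightarrow> real) \<Rightarrow> bool" where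
  "H1 \<Theta> V Vb U Ub \<longleftrightarrow>
    (\<forall>\<theta>\<in>\<Theta>. convex_on UNIV (V \<theta>) \<and> convex_on UNIV (Vb \<theta>) \<and> convex_on UNIV (U \<theta>) \<and> convex_on UNIV (Ub \<theta>)
       \<and> (\<forall>x. V \<theta> x \<ge> 0 \<and> Vb \<theta> x \<ge> 0 \<and> U \<theta> x \<ge> 0 \<and> Ub \<theta> x \<ge> 0))
    \<and> \<comment> \<open>(a) normalisable densities, normalising constants bounded below uniformly\<close>
    (\<exists>c>0. \<forall>\<theta>\<in>\<Theta>.
        ennreal c \<le> (\<integral>\<^sup>+ x. ennreal (exp (- V \<theta> x - U \<theta> x)) \<partial>lborel)
      \<and> (\<integral>\<^sup>+ x. ennreal (exp (- V \<theta> x - U \<theta> x)) \<partial>lborel) < \<infinity>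
      \<and> ennreal c \<le> (\<integral>\<^sup>+ x. ennreal (exp (- Vb \<theta> x - Ub \<theta> x)) \<partial>lborel)
      \<and> (\<integral>\<^sup>+ x. ennreal (exp (- Vb \<theta> x - Ub \<theta> x)) \<partial>lborel) < \<infinity>)
    \<and> \<comment> \<open>(b) C^1 with L-Lipschitz gradients; controlled minimisers\<close>
    (\<exists>L RV1 RV2. \<forall>\<theta>\<in>\<Theta>. \<forall>F\<in>{V \<theta>, Vb \<theta>}.
        (\<exists>G::'a \<Rightarrow> 'a. (\<forall>x. (F has_derivative (\<lambda>h. G x \<bullet> h)) (at x))
             \<and> continuous_on UNIV G
             \<and> (\<forall>x y. norm (G x - G y) \<le> L * norm (x - y)))
      \<and> (\<exists>x0. norm x0 \<le> RV1 \<and> (\<forall>x. F x0 \<le> F x) \<and> \<bar>F x0\<bar> \<le> RV2))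
    \<and> \<comment> \<open>(c) M-Lipschitz, with controlled points\<close>
    (\<exists>M RU1 RU2. \<forall>\<theta>\<in>\<Theta>. \<forall>F\<in>{U \<theta>, Ub \<theta>}.
        (\<forall>x y. \<bar>F x - F y\<bar> \<le> M * norm (x - y))
      \<and> (\<exists>x1. norm x1 \<le> RU1 \<and> \<bar>F x1\<bar> \<le> RU2))"

definition H2 :: "'p set \<Rightarrow> ('p \<Rightarrow> 'a::euclidean_space \<Rightarrow> real) \<Rightarrow> ('p \<Rightarrow> 'a \<Rightarrow> real) \<Rightarrow> real \<Rightarrow> bool" where
  "H2 \<Theta> V Vb m \<longleftrightarrow> m > 0 \<and> (\<forall>\<theta>\<in>\<Theta>. m_convex m (V \<theta>) \<and> m_convex m (Vb \<theta>))"

definition H3 :: "'p set \<Rightarrow> ('p \<Rightarrow> 'a::euclidean_space \<Rightarrow> real) \<Rightarrow> ('p \<Rightarrow> 'a \<Rightarrow> real) \<Rightarrow> real \<Rightarrow> real \<Rightarrow> bool" where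
  "H3 \<Theta> U Ub \<eta> c \<longleftrightarrow> \<eta> > 0 \<and> c \<ge> 0 \<and>
     (\<forall>\<theta>\<in>\<Theta>. \<forall>x. min (U \<theta> x) (Ub \<theta> x) \<ge> \<eta> * norm x - c)"

end

theory Submission
  imports Defs "HOL-Probability.Distributions"
begin

(* Each Gibbs moment is a ratio whose denominator is bounded below uniformly by H1(a), so it
   suffices to dominate W x * exp (- V x - U x) by K * exp (- \<beta> * norm x) with K and \<beta> > 0
   independent of \<theta>, since exp (- \<beta> * norm x) is Lebesgue integrable.  Under H2, V grows
   quadratically away from its minimiser, which is controlled by H1(b), and this beats both the
   polynomial weight and an extra factor exp (- norm x).  Under H3, U grows at least like
   \<eta> * norm x, which beats exp (\<alpha> * sqrt (1 + norm x ^ 2)) for \<alpha> < \<eta>. *)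

lemma nn_integral_exp_neg_abs_finite:
  fixes a :: real
  assumes a: "a > 0"
  shows "(\<integral>\<^sup>+ t. ennreal (exp (- a * \<bar>t\<bar>)) \<partial>lborel) < \<infinity>"
proof -
  have right: "(\<integral>\<^sup>+ t. ennreal (exponential_density a t) \<partial>lborel) = 1"
    using nn_integral_erlang_ith_moment[OF a, where k=0 and i=0] by simp
  have "(\<integral>\<^sup>+ t. ennreal (exponential_density a t) \<partial>lborel)
      = ennreal \<bar>-1\<bar> * (\<integral>\<^sup>+ t. ennreal (exponential_density a (0 + (-1) * t)) \<partial>lborel)"
    by (rule nn_integral_real_affine) auto
  with right have left: "(\<integral>\<^sup>+ t. ennreal (exponential_density a (- t)) \<partial>lborel) = 1"
    by simp
  have "ennreal (exp (- a * \<bar>t\<bar>))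
      \<le> ennreal (1/a) * (ennreal (exponential_density a t) + ennreal (exponential_density a (- t)))"
    for t
  proof -
    have "exp (- a * \<bar>t\<bar>) \<le> (1/a) * (exponential_density a t + exponential_density a (- t))"
      using a by (auto simp: exponential_density_def field_simps abs_if)
    then show ?thesis
      using a by (simp add: ennreal_mult[symmetric] ennreal_plus[symmetric] exponential_density_def
          del: ennreal_plus)
  qed
  then have "(\<integral>\<^sup>+ t. ennreal (exp (- a * \<bar>t\<bar>)) \<partial>lborel)
      \<le> (\<integral>\<^sup>+ t. ennreal (1/a) * (ennreal (exponential_density a t)
                                   + ennreal (exponential_density a (- t))) \<partial>lborel)"
    by (rule nn_integral_mono)
  also have "\<dots> = ennreal (1/a) * 2"
    using right left by (simp add: nn_integral_cmult nn_integral_add)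
  finally show ?thesis
    by (simp add: order_le_less_trans ennreal_mult_less_top)
qed

lemma nn_integral_exp_neg_norm_finite:
  fixes \<beta> :: real
  assumes "\<beta> > 0"
  shows "(\<integral>\<^sup>+ x. ennreal (exp (- \<beta> * norm (x::'a::euclidean_space))) \<partial>lborel) < \<infinity>"
proof -
  define a where "a = \<beta> / DIM('a)"
  have a: "a > 0"
    using assms by (simp add: a_def)
  have "ennreal (exp (- \<beta> * norm x)) \<le> (\<Prod>b\<in>Basis. ennreal (exp (- a * \<bar>x \<bullet> b\<bar>)))"
    for x :: 'a
  proof -
    have "(\<Sum>b\<in>(Basis::'a set). \<bar>x \<bullet> b\<bar>) \<le> (\<Sum>b\<in>(Basis::'a set). norm x)"
      by (rule sum_mono) (simp add: Basis_le_norm)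
    then have "- a * (DIM('a) * norm x) \<le> - a * (\<Sum>b\<in>Basis. \<bar>x \<bullet> b\<bar>)"
      using a by (intro mult_left_mono_neg) auto
    then have "- \<beta> * norm x \<le> (\<Sum>b\<in>Basis. - a * \<bar>x \<bullet> b\<bar>)"
      by (simp add: a_def sum_distrib_left)
    then have "exp (- \<beta> * norm x) \<le> (\<Prod>b\<in>Basis. exp (- a * \<bar>x \<bullet> b\<bar>))"
      by (simp add: exp_sum[symmetric])
    then show ?thesis
      by (simp add: prod_ennreal ennreal_leI)
  qed
  then have "(\<integral>\<^sup>+ x. ennreal (exp (- \<beta> * norm (x::'a))) \<partial>lborel)
      \<le> (\<integral>\<^sup>+ x. (\<Prod>b\<in>Basis. ennreal (exp (- a * \<bar>(x::'a) \<bullet> b\<bar>))) \<partial>lborel)"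
    by (intro nn_integral_mono)
  also have "\<dots> = (\<Prod>b\<in>(Basis::'a set). (\<integral>\<^sup>+ t. ennreal (exp (- a * \<bar>t\<bar>)) \<partial>lborel))"
    by (rule nn_integral_lborel_prod) auto
  also have "\<dots> < \<infinity>"
    using nn_integral_exp_neg_abs_finite[OF a] by (simp add: power_less_top_ennreal)
  finally show ?thesis .
qed

lemma gibbs_moment_uniformly_bounded:
  fixes H :: "'p \<Rightarrow> 'a::euclidean_space \<Rightarrow> real" and W :: "'a \<Rightarrow> real"
  assumes \<beta>: "\<beta> > 0" and K: "K \<ge> 0" and c: "c > 0"
    and dominated: "\<And>\<theta> x. \<theta> \<in> \<Theta> \<Longrightarrow> W x * exp (- H \<theta> x) \<le> K * exp (- \<beta> * norm x)"
    and normaliser: "\<And>\<theta>. \<theta> \<in> \<Theta> \<Longrightarrow> ennreal c \<le> (\<integral>\<^sup>+ x. ennreal (exp (- H \<theta> x)) \<partial>lborel)"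
  shows "\<exists>B<\<infinity>. \<forall>\<theta>\<in>\<Theta>. gibbs_moment (H \<theta>) W \<le> B"
proof -
  define I where "I = (\<integral>\<^sup>+ x. ennreal (exp (- \<beta> * norm (x::'a))) \<partial>lborel)"
  define B where "B = ennreal (K / c) * I"
  have "I < \<infinity>"
    unfolding I_def by (rule nn_integral_exp_neg_norm_finite[OF \<beta>])
  then have "B < \<infinity>"
    by (simp add: B_def ennreal_mult_less_top)
  moreover have "gibbs_moment (H \<theta>) W \<le> B" if \<theta>: "\<theta> \<in> \<Theta>" for \<theta>
  proof -
    let ?Z = "\<integral>\<^sup>+ x. ennreal (exp (- H \<theta> x)) \<partial>lborel"
    have "(\<integral>\<^sup>+ x. ennreal (W x * exp (- H \<theta> x)) \<partial>lborel)
        \<le> (\<integral>\<^sup>+ x. ennreal K * ennreal (exp (- \<beta> * norm (x::'a))) \<partial>lborel)"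
      using dominated[OF \<theta>] K
      by (intro nn_integral_mono) (auto simp: ennreal_mult[symmetric] intro: ennreal_leI)
    also have "\<dots> = ennreal K * I"
      unfolding I_def by (rule nn_integral_cmult) simp
    also have "\<dots> = ennreal c * B"
      using c K by (simp add: B_def ennreal_mult[symmetric] mult.assoc[symmetric])
    also have "\<dots> \<le> ?Z * B"
      by (intro mult_right_mono normaliser[OF \<theta>]) simp
    finally have "(\<integral>\<^sup>+ x. ennreal (W x * exp (- H \<theta> x)) \<partial>lborel) \<le> ?Z * B" .
    moreover have "?Z > 0"
      using normaliser[OF \<theta>] c by (metis ennreal_eq_0_iff not_gr_zero not_le order_le_less_trans)
    ultimately show ?thesis
      unfolding gibbs_moment_def by (rule divide_le_posI_ennreal[rotated])
  qed
  ultimately show ?thesis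
    by blast
qed

lemma power_le_fact_mul_exp:
  fixes y :: real
  assumes "y \<ge> 0"
  shows "y ^ k \<le> fact k * exp y"
proof -
  have "(\<Sum>n\<in>{k}. y^n /\<^sub>R fact n) \<le> (\<Sum>n. y^n /\<^sub>R fact n)"
    using assms exp_converges[of y] by (intro sum_le_suminf) (auto simp: sums_iff)
  then have "y^k / fact k \<le> exp y"
    by (simp add: exp_def divide_inverse mult.commute)
  then show ?thesis
    by (simp add: field_simps)
qed

lemma m_convex_quadratic_growth:
  assumes "m_convex m F" and "\<forall>y. F x0 \<le> F y"
  shows "F x0 + (m/4) * (norm (x - x0))\<^sup>2 \<le> F x"
proof -
  have "(1/2::real) \<in> {0..1}"
    by simp
  have "F x0 \<le> F ((1/2) *\<^sub>R x + (1 - 1/2) *\<^sub>R x0)"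
    using assms(2) by blast
  also have "\<dots> \<le> (1/2) * F x + (1 - 1/2) * F x0 - (m/2) * (1/2) * (1 - 1/2) * (norm (x - x0))\<^sup>2"
    using assms(1) \<open>1/2 \<in> {0..1}\<close> unfolding m_convex_def by blast
  finally show ?thesis
    by simp
qed

lemma W_poly_mul_exp_le:
  fixes x x0 :: "'a::euclidean_space"
  assumes m: "m > 0" and x0: "norm x0 \<le> R" "- C \<le> F0"
    and growth: "F0 + (m/4) * (norm (x - x0))\<^sup>2 \<le> Fx" and "G \<ge> 0"
  shows "W_poly q x * exp (- (Fx + G)) \<le> (1 + fact (2*q)) * exp (2*R + C + 4/m) * exp (- norm x)"
proof -
  define d where "d = norm (x - x0)"
  have "R \<ge> 0"
    using x0(1) norm_ge_zero order_trans by blast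
  have "d \<ge> 0"
    by (simp add: d_def)
  have norm_x: "norm x \<le> d + R"
    using x0(1) norm_triangle_sub[of x x0] by (simp add: d_def)
  have "norm x ^ (2*q) \<le> (d + R) ^ (2*q)"
    using norm_x by (simp add: power_mono)
  also have "\<dots> \<le> fact (2*q) * exp (d + R)"
    using \<open>d \<ge> 0\<close> \<open>R \<ge> 0\<close> by (intro power_le_fact_mul_exp) simp
  moreover have "1 \<le> exp (d + R)"
    using \<open>d \<ge> 0\<close> \<open>R \<ge> 0\<close> by simp
  ultimately have W: "W_poly q x \<le> (1 + fact (2*q)) * exp (d + R)"
    unfolding W_poly_def distrib_right mult_1 by linarith
  have "0 \<le> (m/4) * (d - 4/m)\<^sup>2"
    using m by simp
  also have "\<dots> = (m/4) * d\<^sup>2 - 2 * d + 4/m"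
    using m by (simp add: power2_eq_square field_simps)
  finally have "2 * d - (m/4) * d\<^sup>2 \<le> 4/m"
    by simp
  then have exponent: "(d + R) + (C - (m/4) * d\<^sup>2) \<le> (2*R + C + 4/m) + - norm x"
    using norm_x by linarith
  have "W_poly q x * exp (- (Fx + G)) \<le> ((1 + fact (2*q)) * exp (d + R)) * exp (C - (m/4) * d\<^sup>2)"
    using W growth x0(2) \<open>G \<ge> 0\<close> by (intro mult_mono) (auto simp: d_def)
  also have "\<dots> = (1 + fact (2*q)) * exp ((d + R) + (C - (m/4) * d\<^sup>2))"
    by (simp add: mult.assoc exp_add)
  also have "\<dots> \<le> (1 + fact (2*q)) * exp ((2*R + C + 4/m) + - norm x)"
    using exponent by (intro mult_left_mono) auto
  finally show ?thesis
    by (simp only: mult.assoc exp_add)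
qed

lemma W_exp_mul_exp_le:
  fixes x :: "'a::euclidean_space"
  assumes "\<alpha> < \<eta>" and "F \<ge> 0" and "G \<ge> \<eta> * norm x - c"
  shows "W_exp \<alpha> x * exp (- (F + G)) \<le> exp (\<bar>\<alpha>\<bar> + c) * exp (- ((\<eta> - \<alpha>)/2) * norm x)"
proof -
  have upper: "sqrt (1 + (norm x)\<^sup>2) \<le> 1 + norm x"
    by (rule real_le_lsqrt) (auto simp: power2_eq_square algebra_simps)
  have lower: "norm x \<le> sqrt (1 + (norm x)\<^sup>2)"
    by (rule real_le_rsqrt) simp
  have "\<alpha> * sqrt (1 + (norm x)\<^sup>2) \<le> \<bar>\<alpha>\<bar> + \<alpha> * norm x"
  proof (cases "\<alpha> \<ge> 0")
    case True
    then show ?thesis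
      using mult_left_mono[OF upper True] by (simp add: algebra_simps)
  next
    case False
    then have "\<alpha> * sqrt (1 + (norm x)\<^sup>2) \<le> \<alpha> * norm x"
      by (intro mult_left_mono_neg[OF lower]) simp
    with False show ?thesis
      by linarith
  qed
  moreover have "((\<eta> - \<alpha>)/2) * norm x \<le> (\<eta> - \<alpha>) * norm x"
    using assms(1) by (intro mult_right_mono) auto
  ultimately have "\<alpha> * sqrt (1 + (norm x)\<^sup>2) + - (F + G) \<le> (\<bar>\<alpha>\<bar> + c) + - ((\<eta> - \<alpha>)/2) * norm x"
    using assms(2,3) by (simp add: algebra_simps)
  then show ?thesis
    unfolding W_exp_def by (simp only: mult_exp_exp exp_le_cancel_iff)
qed

lemma gibbs_moment_W_poly_uniformly_bounded:
  fixes F G :: "'p \<Rightarrow> 'a::euclidean_space \<Rightarrow> real"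
  assumes "m > 0" and "c > 0"
    and "\<And>\<theta>. \<theta> \<in> \<Theta> \<Longrightarrow> m_convex m (F \<theta>)"
    and "\<And>\<theta>. \<theta> \<in> \<Theta> \<Longrightarrow> \<exists>x0. norm x0 \<le> R \<and> (\<forall>x. F \<theta> x0 \<le> F \<theta> x) \<and> \<bar>F \<theta> x0\<bar> \<le> C"
    and "\<And>\<theta> x. \<theta> \<in> \<Theta> \<Longrightarrow> G \<theta> x \<ge> 0"
    and "\<And>\<theta>. \<theta> \<in> \<Theta> \<Longrightarrow> ennreal c \<le> (\<integral>\<^sup>+ x. ennreal (exp (- F \<theta> x - G \<theta> x)) \<partial>lborel)"
  shows "\<exists>B<\<infinity>. \<forall>\<theta>\<in>\<Theta>. gibbs_moment (\<lambda>x. F \<theta> x + G \<theta> x) (W_poly q) \<le> B"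
proof (rule gibbs_moment_uniformly_bounded[where \<beta>=1])
  fix \<theta> x
  assume "\<theta> \<in> \<Theta>"
  then obtain x0 where x0: "norm x0 \<le> R" "\<forall>y. F \<theta> x0 \<le> F \<theta> y" "\<bar>F \<theta> x0\<bar> \<le> C"
    using assms(4) by blast
  then have "- C \<le> F \<theta> x0"
    by linarith
  from W_poly_mul_exp_le[OF assms(1) x0(1) this
      m_convex_quadratic_growth[OF assms(3)[OF \<open>\<theta> \<in> \<Theta>\<close>] x0(2)] assms(5)[OF \<open>\<theta> \<in> \<Theta>\<close>]]
  show "W_poly q x * exp (- (F \<theta> x + G \<theta> x))
      \<le> (1 + fact (2*q)) * exp (2*R + C + 4/m) * exp (- 1 * norm x)"
    by simp
qed (use assms(2,6) in auto)

lemma gibbs_moment_W_exp_uniformly_bounded: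
  fixes F G :: "'p \<Rightarrow> 'a::euclidean_space \<Rightarrow> real"
  assumes "\<alpha> < \<eta>" and "c0 > 0"
    and "\<And>\<theta> x. \<theta> \<in> \<Theta> \<Longrightarrow> F \<theta> x \<ge> 0"
    and "\<And>\<theta> x. \<theta> \<in> \<Theta> \<Longrightarrow> G \<theta> x \<ge> \<eta> * norm x - c"
    and "\<And>\<theta>. \<theta> \<in> \<Theta> \<Longrightarrow> ennreal c0 \<le> (\<integral>\<^sup>+ x. ennreal (exp (- F \<theta> x - G \<theta> x)) \<partial>lborel)"
  shows "\<exists>B<\<infinity>. \<forall>\<theta>\<in>\<Theta>. gibbs_moment (\<lambda>x. F \<theta> x + G \<theta> x) (W_exp \<alpha>) \<le> B"
proof (rule gibbs_moment_uniformly_bounded[where \<beta>="(\<eta> - \<alpha>)/2" and K="exp (\<bar>\<alpha>\<bar> + c)"])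
  fix \<theta> x
  assume "\<theta> \<in> \<Theta>"
  then show "W_exp \<alpha> x * exp (- (F \<theta> x + G \<theta> x))
      \<le> exp (\<bar>\<alpha>\<bar> + c) * exp (- ((\<eta> - \<alpha>)/2) * norm x)"
    using W_exp_mul_exp_le assms(1,3,4) by blast
qed (use assms(1,2,5) in auto)

lemma SUP_add_less_top:
  fixes f g :: "'p \<Rightarrow> ennreal"
  assumes "\<exists>B<\<infinity>. \<forall>\<theta>\<in>\<Theta>. f \<theta> \<le> B" and "\<exists>B<\<infinity>. \<forall>\<theta>\<in>\<Theta>. g \<theta> \<le> B"
  shows "(SUP \<theta>\<in>\<Theta>. f \<theta> + g \<theta>) < \<infinity>"
proof -
  obtain Bf Bg where "Bf < \<infinity>" "\<forall>\<theta>\<in>\<Theta>. f \<theta> \<le> Bf" "Bg < \<infinity>" "\<forall>\<theta>\<in>\<Theta>. g \<theta> \<le> Bg"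
    using assms by blast
  then have "(SUP \<theta>\<in>\<Theta>. f \<theta> + g \<theta>) \<le> Bf + Bg"
    by (intro SUP_least add_mono) auto
  also have "\<dots> < \<infinity>"
    using \<open>Bf < \<infinity>\<close> \<open>Bg < \<infinity>\<close> by simp
  finally show ?thesis .
qed

theorem lemma27:
  fixes \<Theta> :: "'p::euclidean_space set"
    and V Vb U Ub :: "'p \<Rightarrow> 'a::euclidean_space \<Rightarrow> real"
  assumes "\<Theta> \<noteq> {}"
    and "H1 \<Theta> V Vb U Ub"
  shows "(\<forall>m. H2 \<Theta> V Vb m \<longrightarrow> (\<forall>q::nat. q \<ge> 1 \<longrightarrow>
            (SUP \<theta>\<in>\<Theta>. gibbs_moment (\<lambda>x. V \<theta> x + U \<theta> x) (W_poly q)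
                      + gibbs_moment (\<lambda>x. Vb \<theta> x + Ub \<theta> x) (W_poly q)) < \<infinity>))
       \<and> (\<forall>\<eta> c. H3 \<Theta> U Ub \<eta> c \<longrightarrow> (\<forall>\<alpha>. \<alpha> < \<eta> \<longrightarrow>
            (SUP \<theta>\<in>\<Theta>. gibbs_moment (\<lambda>x. V \<theta> x + U \<theta> x) (W_exp \<alpha>)
                      + gibbs_moment (\<lambda>x. Vb \<theta> x + Ub \<theta> x) (W_exp \<alpha>)) < \<infinity>))"
proof -
  obtain c0 where "c0 > 0"
    and normalisers: "\<forall>\<theta>\<in>\<Theta>. ennreal c0 \<le> (\<integral>\<^sup>+ x. ennreal (exp (- V \<theta> x - U \<theta> x)) \<partial>lborel)
      \<and> ennreal c0 \<le> (\<integral>\<^sup>+ x. ennreal (exp (- Vb \<theta> x - Ub \<theta> x)) \<partial>lborel)"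
    using assms(2) unfolding H1_def by auto
  obtain R C where minimisers: "\<forall>\<theta>\<in>\<Theta>. \<forall>F\<in>{V \<theta>, Vb \<theta>}.
      \<exists>x0. norm x0 \<le> R \<and> (\<forall>x. F x0 \<le> F x) \<and> \<bar>F x0\<bar> \<le> C"
    using assms(2) unfolding H1_def by metis
  have nonneg: "\<forall>\<theta>\<in>\<Theta>. \<forall>x. V \<theta> x \<ge> 0 \<and> Vb \<theta> x \<ge> 0 \<and> U \<theta> x \<ge> 0 \<and> Ub \<theta> x \<ge> 0"
    using assms(2) unfolding H1_def by blast
  have "(SUP \<theta>\<in>\<Theta>. gibbs_moment (\<lambda>x. V \<theta> x + U \<theta> x) (W_poly q)
                  + gibbs_moment (\<lambda>x. Vb \<theta> x + Ub \<theta> x) (W_poly q)) < \<infinity>"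
    if "H2 \<Theta> V Vb m" for m q
    using that \<open>c0 > 0\<close> normalisers minimisers nonneg unfolding H2_def
    by (intro SUP_add_less_top gibbs_moment_W_poly_uniformly_bounded[where m=m and R=R and C=C]) auto
  moreover have "(SUP \<theta>\<in>\<Theta>. gibbs_moment (\<lambda>x. V \<theta> x + U \<theta> x) (W_exp \<alpha>)
                  + gibbs_moment (\<lambda>x. Vb \<theta> x + Ub \<theta> x) (W_exp \<alpha>)) < \<infinity>"
    if "H3 \<Theta> U Ub \<eta> c" and "\<alpha> < \<eta>" for \<eta> c \<alpha>
    using that \<open>c0 > 0\<close> normalisers nonneg unfolding H3_def
    by (intro SUP_add_less_top gibbs_moment_W_exp_uniformly_bounded[where \<eta>=\<eta> and c=c]) auto
  ultimately show ?thesis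
    by blast
qed

end
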